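(* For every finite ultrametric space $(X,d)$ with $|X|\geqslant 2$ the following are equivalent: (i) $(X,d)\in\mathfrak U$; (ii) for every $r\in\operatorname{Sp}(X)$ the graph $G'_{r,X}$ is complete bipartite.
   Context: For a metric space $(X,d)$, $\operatorname{Sp}(X)=\{d(x,y): x,y\in X,\ x\neq y\}$. $\mathfrak U$ denotes the class of finite ultrametric spaces $X$ with $|\operatorname{Sp}(X)|=|X|-1$. For $r\in\operatorname{Sp}(X)$, $G_{r,X}$ is the graph with vertex set $X$ in which $\{u,v\}$ is an edge iff $d(u,v)=r$. For a nonempty graph $G=(V,E)$, $G'$ denotes the subgraph induced by $V$ minus the set of isolated vertices of $G$. A complete bipartite graph is a nonempty graph whose vertex set is partitioned into two disjoint sets such that no edge joins vertices of the same set and any two vertices from different sets are adjacent. *)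

theory Defs
  imports Complex_Main
begin

definition metric_on :: "'a set \<Rightarrow> ('a \<Rightarrow> 'a \<Rightarrow> real) \<Rightarrow> bool" where
  "metric_on X d \<longleftrightarrow>
     (\<forall>x\<in>X. \<forall>y\<in>X. d x y \<ge> 0 \<and> (d x y = 0 \<longleftrightarrow> x = y) \<and> d x y = d y x) \<and>
     (\<forall>x\<in>X. \<forall>y\<in>X. \<forall>z\<in>X. d x z \<le> d x y + d y z)"

definition ultrametric_on :: "'a set \<Rightarrow> ('a \<Rightarrow> 'a \<Rightarrow> real) \<Rightarrow> bool" where
  "ultrametric_on X d \<longleftrightarrow> metric_on X d \<and>
     (\<forall>x\<in>X. \<forall>y\<in>X. \<forall>z\<in>X. d x z \<le> max (d x y) (d y z))"

definition Sp :: "'a set \<Rightarrow> ('a \<Rightarrow> 'a \<Rightarrow> real) \<Rightarrow> real set" where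
  "Sp X d = {d x y | x y. x \<in> X \<and> y \<in> X \<and> x \<noteq> y}"

definition in_U :: "'a set \<Rightarrow> ('a \<Rightarrow> 'a \<Rightarrow> real) \<Rightarrow> bool" where
  "in_U X d \<longleftrightarrow> finite X \<and> ultrametric_on X d \<and> card (Sp X d) = card X - 1"

text \<open>Simple graphs as pairs (V, E) with E a set of 2-element subsets of V.\<close>
type_synonym 'a graph = "'a set \<times> 'a set set"

definition G_graph :: "real \<Rightarrow> 'a set \<Rightarrow> ('a \<Rightarrow> 'a \<Rightarrow> real) \<Rightarrow> 'a graph" where
  "G_graph r X d = (X, {{u, v} | u v. u \<in> X \<and> v \<in> X \<and> u \<noteq> v \<and> d u v = r})"

definition isolated_vertices :: "'a graph \<Rightarrow> 'a set" where
  "isolated_vertices G = {v \<in> fst G. \<forall>e\<in>snd G. v \<notin> e}"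

definition G_prime :: "'a graph \<Rightarrow> 'a graph" where
  "G_prime G = (let W = fst G - isolated_vertices G in (W, {e \<in> snd G. e \<subseteq> W}))"

definition complete_bipartite :: "'a graph \<Rightarrow> bool" where
  "complete_bipartite G \<longleftrightarrow> snd G \<noteq> {} \<and>
     (\<exists>A B. A \<inter> B = {} \<and> A \<union> B = fst G \<and>
        (\<forall>e\<in>snd G. \<not> e \<subseteq> A \<and> \<not> e \<subseteq> B) \<and>
        (\<forall>a\<in>A. \<forall>b\<in>B. {a, b} \<in> snd G))"

end

(*
  Let D be the diameter of X and fix x0 in X. The points at distance < D from x0 form a ball
  "near", and by the ultrametric inequality every point of far = X - near is at distance
  exactly D from every point of near. Hence Sp X = {D} \<union> Sp near \<union> Sp far with D \<notin> Sp near,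
  and induction gives |Sp X| \<le> |X| - 1, with equality iff D \<notin> Sp far, the two spectra are
  disjoint and both halves are in U. The graph condition splits in the same way: G'_D is
  complete bipartite (with parts near, far) iff D \<notin> Sp far, since otherwise two far points
  together with x0 form a triangle; and for r \<noteq> D the graph G'_r of X is the disjoint union
  of those of near and far, which is complete bipartite only if one of them is empty.
  Induction on |X| matches the two conditions.
*)

theory Submission
  imports Defs
begin

lemma ultrametricD:
  assumes "ultrametric_on X d" "x \<in> X" "y \<in> X"
  shows "d x x = 0" and "d x y = d y x" and "x \<noteq> y \<Longrightarrow> d x y > 0"
    and "z \<in> X \<Longrightarrow> d x z \<le> max (d x y) (d y z)"
proof -
  have "\<forall>x\<in>X. \<forall>y\<in>X. d x y \<ge> 0 \<and> (d x y = 0 \<longleftrightarrow> x = y) \<and> d x y = d y x"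
    and "\<forall>x\<in>X. \<forall>y\<in>X. \<forall>z\<in>X. d x z \<le> max (d x y) (d y z)"
    using assms(1) unfolding ultrametric_on_def metric_on_def by blast+
  with assms(2,3) show "d x x = 0" "d x y = d y x" "x \<noteq> y \<Longrightarrow> d x y > 0"
    "z \<in> X \<Longrightarrow> d x z \<le> max (d x y) (d y z)"
    by (simp_all add: order.not_eq_order_implies_strict)
qed

lemma ultrametric_on_subset: "ultrametric_on X d \<Longrightarrow> Y \<subseteq> X \<Longrightarrow> ultrametric_on Y d"
  unfolding ultrametric_on_def metric_on_def by blast

lemma SpI: "x \<in> X \<Longrightarrow> y \<in> X \<Longrightarrow> x \<noteq> y \<Longrightarrow> d x y \<in> Sp X d"
  unfolding Sp_def by blast

lemma SpE:
  assumes "s \<in> Sp X d"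
  obtains x y where "x \<in> X" "y \<in> X" "x \<noteq> y" "s = d x y"
  using assms unfolding Sp_def by blast

lemma Sp_mono: "Y \<subseteq> X \<Longrightarrow> Sp Y d \<subseteq> Sp X d"
  unfolding Sp_def by blast

lemma finite_Sp: "finite X \<Longrightarrow> finite (Sp X d)"
proof -
  assume "finite X"
  have "Sp X d \<subseteq> (\<lambda>(x, y). d x y) ` (X \<times> X)"
    unfolding Sp_def by auto
  then show ?thesis
    using \<open>finite X\<close> finite_subset by blast
qed

lemma Sp_singleton [simp]: "Sp {x} d = {}"
  unfolding Sp_def by auto

section \<open>Distance graphs\<close>

definition dist_edges :: "real \<Rightarrow> 'a set \<Rightarrow> ('a \<Rightarrow> 'a \<Rightarrow> real) \<Rightarrow> 'a set set" where
  "dist_edges r X d = {{u, v} | u v. u \<in> X \<and> v \<in> X \<and> u \<noteq> v \<and> d u v = r}"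

lemma G_prime_G_graph: "G_prime (G_graph r X d) = (\<Union>(dist_edges r X d), dist_edges r X d)"
  unfolding G_prime_def isolated_vertices_def G_graph_def Let_def dist_edges_def
  by auto

lemma dist_edgesI: "u \<in> X \<Longrightarrow> v \<in> X \<Longrightarrow> u \<noteq> v \<Longrightarrow> d u v = r \<Longrightarrow> {u, v} \<in> dist_edges r X d"
  unfolding dist_edges_def by blast

lemma dist_edgesE:
  assumes "e \<in> dist_edges r X d"
  obtains u v where "e = {u, v}" "u \<in> X" "v \<in> X" "u \<noteq> v" "d u v = r"
  using assms unfolding dist_edges_def by blast

lemma dist_edges_subset: "e \<in> dist_edges r X d \<Longrightarrow> e \<subseteq> X"
  by (auto elim: dist_edgesE)

lemma dist_edges_eq_empty_iff: "dist_edges r X d = {} \<longleftrightarrow> r \<notin> Sp X d"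
  unfolding dist_edges_def Sp_def by blast

lemma dist_of_dist_edge:
  assumes "ultrametric_on X d" "{p, q} \<in> dist_edges r X d"
  shows "d p q = r"
  using assms(2)
proof (rule dist_edgesE)
  fix u v assume "{p, q} = {u, v}" "u \<in> X" "v \<in> X" "d u v = r"
  moreover have "d v u = d u v"
    using ultrametricD(2)[OF assms(1) \<open>v \<in> X\<close> \<open>u \<in> X\<close>] .
  ultimately show "d p q = r"
    by (auto simp: doubleton_eq_iff)
qed

lemma complete_bipartite_edge_graphI:
  assumes "E \<noteq> {}" "A \<inter> B = {}" "A \<union> B = \<Union>E"
    and "\<And>e. e \<in> E \<Longrightarrow> \<not> e \<subseteq> A \<and> \<not> e \<subseteq> B"
    and "\<And>a b. a \<in> A \<Longrightarrow> b \<in> B \<Longrightarrow> {a, b} \<in> E"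
  shows "complete_bipartite (\<Union>E, E)"
proof -
  have "\<forall>e\<in>E. \<not> e \<subseteq> A \<and> \<not> e \<subseteq> B" "\<forall>a\<in>A. \<forall>b\<in>B. {a, b} \<in> E"
    using assms(4,5) by blast+
  then show ?thesis
    unfolding complete_bipartite_def fst_conv snd_conv using assms(1-3) by blast
qed

lemma complete_bipartite_triangle_free:
  assumes "complete_bipartite (\<Union>E, E)" "{x, y} \<in> E" "{y, z} \<in> E" "{x, z} \<in> E"
  shows False
proof -
  obtain A B where AB: "A \<union> B = \<Union>E" "\<forall>e\<in>E. \<not> e \<subseteq> A \<and> \<not> e \<subseteq> B"
    using assms(1) unfolding complete_bipartite_def by auto
  have "x \<in> A \<union> B" "y \<in> A \<union> B" "z \<in> A \<union> B"
    using AB(1) assms(2,3) by blast+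
  moreover have "\<not> {x, y} \<subseteq> A" "\<not> {x, y} \<subseteq> B" "\<not> {y, z} \<subseteq> A" "\<not> {y, z} \<subseteq> B"
      "\<not> {x, z} \<subseteq> A" "\<not> {x, z} \<subseteq> B"
    using AB(2) assms(2-4) by blast+
  ultimately show False by auto
qed

lemma complete_bipartite_edges_joined:
  assumes "complete_bipartite (\<Union>E, E)" "e \<in> E" "e' \<in> E"
  shows "\<exists>p\<in>e. \<exists>q\<in>e'. {p, q} \<in> E"
proof -
  obtain A B where AB: "A \<union> B = \<Union>E" "\<forall>e\<in>E. \<not> e \<subseteq> A \<and> \<not> e \<subseteq> B"
      "\<forall>a\<in>A. \<forall>b\<in>B. {a, b} \<in> E"
    using assms(1) unfolding complete_bipartite_def by auto
  have "e \<subseteq> A \<union> B" "e' \<subseteq> A \<union> B" "\<not> e \<subseteq> B" "\<not> e' \<subseteq> A"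
    using AB(1,2) assms(2,3) by blast+
  then obtain p q where "p \<in> e" "p \<in> A" "q \<in> e'" "q \<in> B" by blast
  then show ?thesis using AB(3) by blast
qed

definition bipartite_distance_graphs :: "'a set \<Rightarrow> ('a \<Rightarrow> 'a \<Rightarrow> real) \<Rightarrow> bool" where
  "bipartite_distance_graphs X d \<longleftrightarrow>
     (\<forall>r\<in>Sp X d. complete_bipartite (G_prime (G_graph r X d)))"

lemma bipartite_distance_graphs_singleton: "bipartite_distance_graphs {x} d"
  unfolding bipartite_distance_graphs_def by simp

section \<open>Splitting off the diameter\<close>

locale finite_ultrametric_split =
  fixes X :: "'a set" and d :: "'a \<Rightarrow> 'a \<Rightarrow> real" and x0 :: 'a
  assumes finite: "finite X" and ultrametric: "ultrametric_on X d"
    and base: "x0 \<in> X" and card_ge_2: "card X \<ge> 2"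
begin

definition diam :: real where "diam = Max (Sp X d)"
definition near :: "'a set" where "near = {y \<in> X. d x0 y < diam}"
definition far :: "'a set" where "far = X - near"

lemma Sp_nonempty: "Sp X d \<noteq> {}"
proof -
  have "X \<noteq> {x0}"
    using card_ge_2 by auto
  then obtain y where "y \<in> X" "y \<noteq> x0"
    using base by blast
  then show ?thesis
    using SpI[OF base] by blast
qed

lemma diam_in_Sp: "diam \<in> Sp X d"
  unfolding diam_def using Sp_nonempty finite_Sp[OF finite] by simp

lemma diam_pos: "diam > 0"
  using diam_in_Sp by (auto elim!: SpE intro: ultrametricD(3)[OF ultrametric])

lemma dist_le_diam:
  assumes "x \<in> X" "y \<in> X"
  shows "d x y \<le> diam"
proof (cases "x = y")
  case True
  then have "d x y = 0" using ultrametricD(1)[OF ultrametric assms] by simp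
  then show ?thesis using diam_pos by linarith
next
  case False
  then have "d x y \<in> Sp X d" using SpI[OF assms] by blast
  then show ?thesis unfolding diam_def using finite_Sp[OF finite] by simp
qed

lemma near_far_partition: "near \<subseteq> X" "far \<subseteq> X" "near \<inter> far = {}" "near \<union> far = X"
  unfolding near_def far_def by auto

lemma base_near: "x0 \<in> near"
  unfolding near_def using base ultrametricD(1)[OF ultrametric base] diam_pos by simp

lemma dist_near_less: "a \<in> near \<Longrightarrow> a' \<in> near \<Longrightarrow> d a a' < diam"
  unfolding near_def
  using ultrametricD(2,4)[OF ultrametric _ base] by (fastforce simp: max_less_iff_conj)

lemma dist_near_far: "a \<in> near \<Longrightarrow> b \<in> far \<Longrightarrow> d a b = diam"
proof -
  assume "a \<in> near" "b \<in> far"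
  then have a: "a \<in> X" "d x0 a < diam" and b: "b \<in> X" "d x0 b \<ge> diam"
    unfolding near_def far_def by auto
  have "d x0 b \<le> max (d x0 a) (d a b)"
    using ultrametricD(4)[OF ultrametric base a(1) b(1)] .
  with a b have "d a b \<ge> diam" by linarith
  with dist_le_diam[OF a(1) b(1)] show ?thesis by linarith
qed

lemma far_nonempty: "far \<noteq> {}"
proof
  assume "far = {}"
  then have "near = X" using near_far_partition(4) by simp
  moreover obtain x y where "x \<in> X" "y \<in> X" "diam = d x y"
    using diam_in_Sp by (rule SpE)
  ultimately show False
    using dist_near_less[of x y] by simp
qed

lemma finite_near: "finite near" and finite_far: "finite far"
  using finite_subset[OF near_far_partition(1) finite] finite_subset[OF near_far_partition(2) finite] .

lemma ultrametric_near: "ultrametric_on near d" and ultrametric_far: "ultrametric_on far d"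
  using ultrametric_on_subset[OF ultrametric] near_far_partition(1,2) by auto

lemma card_near_far: "card near + card far = card X" "card near \<ge> 1" "card far \<ge> 1"
proof -
  show "card near + card far = card X"
    using card_Un_disjoint[OF finite_near finite_far near_far_partition(3)] near_far_partition(4)
    by simp
  show "card near \<ge> 1" using finite_near base_near by (auto simp: Suc_le_eq card_gt_0_iff)
  show "card far \<ge> 1" using finite_far far_nonempty by (auto simp: Suc_le_eq card_gt_0_iff)
qed

lemma card_near_less: "card near < card X" and card_far_less: "card far < card X"
  using card_near_far by linarith+

lemma Sp_split: "Sp X d = insert diam (Sp near d \<union> Sp far d)"
proof
  show "insert diam (Sp near d \<union> Sp far d) \<subseteq> Sp X d"
    using diam_in_Sp Sp_mono near_far_partition(1,2) by blast
  show "Sp X d \<subseteq> insert diam (Sp near d \<union> Sp far d)"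
  proof
    fix s assume "s \<in> Sp X d"
    then obtain x y where xy: "x \<in> X" "y \<in> X" "x \<noteq> y" "s = d x y"
      by (rule SpE)
    consider "x \<in> near" "y \<in> near" | "x \<in> far" "y \<in> far"
      | "x \<in> near" "y \<in> far" | "x \<in> far" "y \<in> near"
      using xy(1,2) near_far_partition(4) by blast
    then show "s \<in> insert diam (Sp near d \<union> Sp far d)"
    proof cases
      case 1
      then show ?thesis using SpI[of x near y d] xy(3,4) by simp
    next
      case 2
      then show ?thesis using SpI[of x far y d] xy(3,4) by simp
    next
      case 3
      then show ?thesis using dist_near_far xy(4) by simp
    next
      case 4
      then show ?thesis
        using dist_near_far ultrametricD(2)[OF ultrametric xy(1,2)] xy(4) by simp
    qed
  qed
qed

lemma diam_notin_Sp_near: "diam \<notin> Sp near d"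
proof
  assume "diam \<in> Sp near d"
  then obtain a a' where "a \<in> near" "a' \<in> near" "diam = d a a'"
    by (rule SpE)
  then show False using dist_near_less[of a a'] by linarith
qed

lemma dist_edges_split:
  assumes "r \<noteq> diam"
  shows "dist_edges r X d = dist_edges r near d \<union> dist_edges r far d"
proof
  show "dist_edges r X d \<subseteq> dist_edges r near d \<union> dist_edges r far d"
  proof
    fix e assume "e \<in> dist_edges r X d"
    then obtain u v where uv: "e = {u, v}" "u \<in> X" "v \<in> X" "u \<noteq> v" "d u v = r"
      by (rule dist_edgesE)
    have "d v u = d u v" using ultrametricD(2)[OF ultrametric uv(3,2)] .
    then have "\<not> (u \<in> near \<and> v \<in> far)" "\<not> (u \<in> far \<and> v \<in> near)"
      using dist_near_far assms uv(5) by auto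
    then have "(u \<in> near \<and> v \<in> near) \<or> (u \<in> far \<and> v \<in> far)"
      using uv(2,3) near_far_partition(4) by blast
    then show "e \<in> dist_edges r near d \<union> dist_edges r far d"
      using uv(1,4,5) dist_edgesI[of u _ v d r] by blast
  qed
  show "dist_edges r near d \<union> dist_edges r far d \<subseteq> dist_edges r X d"
    using near_far_partition(1,2) by (auto elim!: dist_edgesE intro!: dist_edgesI)
qed

lemma diam_edge: "a \<in> near \<Longrightarrow> b \<in> far \<Longrightarrow> {a, b} \<in> dist_edges diam X d"
  using dist_near_far near_far_partition by (intro dist_edgesI) auto

end

lemma singleton_if_card_less_2:
  assumes "finite X" "X \<noteq> {}" "\<not> card X \<ge> 2"
  obtains x where "X = {x}"
proof -
  have "card X \<noteq> 0" using assms(1,2) by simp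
  then have "card X = 1" using assms(3) by linarith
  then show ?thesis using that card_1_singletonE by blast
qed

lemma card_Sp_le:
  "finite X \<Longrightarrow> ultrametric_on X d \<Longrightarrow> X \<noteq> {} \<Longrightarrow> card (Sp X d) \<le> card X - 1"
proof (induction "card X" arbitrary: X rule: less_induct)
  case less
  show ?case
  proof (cases "card X \<ge> 2")
    case False
    with less.prems show ?thesis by (auto elim: singleton_if_card_less_2)
  next
    case True
    obtain x0 where "x0 \<in> X" using less.prems by blast
    then interpret finite_ultrametric_split X d x0
      using less.prems True by unfold_locales
    have "near \<noteq> {}" using base_near by blast
    then have "card (Sp near d) \<le> card near - 1" "card (Sp far d) \<le> card far - 1"
      using less.hyps card_near_less card_far_less finite_near finite_far
        ultrametric_near ultrametric_far far_nonempty by blast+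
    moreover have "card (Sp X d) \<le> Suc (card (Sp near d \<union> Sp far d))"
      unfolding Sp_split by (simp add: card_insert_if finite_Sp finite_near finite_far)
    moreover have "card (Sp near d \<union> Sp far d) \<le> card (Sp near d) + card (Sp far d)"
      by (rule card_Un_le)
    ultimately show ?thesis using card_near_far by linarith
  qed
qed

context finite_ultrametric_split
begin

lemma card_Sp_eq_iff:
  "card (Sp X d) = card X - 1 \<longleftrightarrow>
     diam \<notin> Sp far d \<and> Sp near d \<inter> Sp far d = {} \<and>
     card (Sp near d) = card near - 1 \<and> card (Sp far d) = card far - 1"
proof -
  let ?S1 = "Sp near d" and ?S2 = "Sp far d"
  have fin: "finite ?S1" "finite ?S2"
    using finite_Sp finite_near finite_far by blast+
  have bounds: "card ?S1 \<le> card near - 1" "card ?S2 \<le> card far - 1"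
    using card_Sp_le finite_near finite_far ultrametric_near ultrametric_far
      base_near far_nonempty by blast+
  have Un_Int: "card (?S1 \<union> ?S2) + card (?S1 \<inter> ?S2) = card ?S1 + card ?S2"
    using card_Un_Int[OF fin] by simp
  have Int_empty: "?S1 \<inter> ?S2 = {} \<longleftrightarrow> card (?S1 \<inter> ?S2) = 0"
    using fin by simp
  show ?thesis
  proof (cases "diam \<in> ?S2")
    case True
    then have "card (Sp X d) = card (?S1 \<union> ?S2)"
      unfolding Sp_split by (simp add: insert_absorb)
    then show ?thesis
      using True bounds Un_Int card_near_far by linarith
  next
    case False
    then have "card (Sp X d) = Suc (card (?S1 \<union> ?S2))"
      unfolding Sp_split using fin diam_notin_Sp_near by simp
    then show ?thesis
      using False bounds Un_Int Int_empty card_near_far by linarith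
  qed
qed

lemma diam_graph_complete_bipartite:
  assumes "diam \<notin> Sp far d"
  shows "complete_bipartite (G_prime (G_graph diam X d))"
  unfolding G_prime_G_graph
proof (rule complete_bipartite_edge_graphI[where A = near and B = far])
  obtain b where b: "b \<in> far" using far_nonempty by blast
  show "dist_edges diam X d \<noteq> {}" using diam_edge[OF base_near b] by blast
  show "near \<inter> far = {}" by (rule near_far_partition(3))
  show "near \<union> far = \<Union>(dist_edges diam X d)"
  proof
    show "near \<union> far \<subseteq> \<Union>(dist_edges diam X d)"
      using diam_edge[OF _ b] diam_edge[OF base_near] by blast
    show "\<Union>(dist_edges diam X d) \<subseteq> near \<union> far"
      using dist_edges_subset near_far_partition(4) by blast
  qed
  show "\<not> e \<subseteq> near \<and> \<not> e \<subseteq> far" if "e \<in> dist_edges diam X d" for e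
    using that
  proof (rule dist_edgesE)
    fix u v assume uv: "e = {u, v}" "u \<noteq> v" "d u v = diam"
    have "\<not> (u \<in> near \<and> v \<in> near)" using dist_near_less[of u v] uv(3) by auto
    moreover have "\<not> (u \<in> far \<and> v \<in> far)" using SpI[of u far v d] uv(2,3) assms by auto
    ultimately show ?thesis using uv(1) by simp
  qed
  show "\<And>a b. a \<in> near \<Longrightarrow> b \<in> far \<Longrightarrow> {a, b} \<in> dist_edges diam X d"
    by (rule diam_edge)
qed

lemma diam_notin_Sp_far_if_complete_bipartite:
  assumes "complete_bipartite (G_prime (G_graph diam X d))"
  shows "diam \<notin> Sp far d"
proof
  assume "diam \<in> Sp far d"
  then obtain b b' where b: "b \<in> far" "b' \<in> far" "b \<noteq> b'" "diam = d b b'"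
    by (rule SpE)
  have "{b, b'} \<in> dist_edges diam X d"
    using b near_far_partition(2) by (intro dist_edgesI) auto
  moreover have "{x0, b} \<in> dist_edges diam X d" "{x0, b'} \<in> dist_edges diam X d"
    using diam_edge base_near b(1,2) by blast+
  moreover have "complete_bipartite (\<Union>(dist_edges diam X d), dist_edges diam X d)"
    using assms unfolding G_prime_G_graph .
  ultimately show False
    using complete_bipartite_triangle_free by metis
qed

lemma not_complete_bipartite_if_shared_distance:
  assumes "r \<in> Sp near d" "r \<in> Sp far d"
  shows "\<not> complete_bipartite (G_prime (G_graph r X d))"
proof
  assume cb: "complete_bipartite (G_prime (G_graph r X d))"
  obtain a a' where a: "a \<in> near" "a' \<in> near" "a \<noteq> a'" "r = d a a'"
    using assms(1) by (rule SpE)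
  obtain b b' where b: "b \<in> far" "b' \<in> far" "b \<noteq> b'" "r = d b b'"
    using assms(2) by (rule SpE)
  have "{a, a'} \<in> dist_edges r X d" "{b, b'} \<in> dist_edges r X d"
    using a b near_far_partition(1,2) by (auto intro!: dist_edgesI)
  then obtain p q where "p \<in> {a, a'}" "q \<in> {b, b'}" "{p, q} \<in> dist_edges r X d"
    using complete_bipartite_edges_joined cb unfolding G_prime_G_graph by blast
  then have "d p q = r" "d p q = diam"
    using dist_of_dist_edge[OF ultrametric] dist_near_far[of p q] a(1,2) b(1,2) by auto
  then show False using assms(1) diam_notin_Sp_near by simp
qed

lemma G_prime_G_graph_eq_near:
  assumes "r \<noteq> diam" "r \<notin> Sp far d"
  shows "G_prime (G_graph r X d) = G_prime (G_graph r near d)"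
proof -
  have "dist_edges r far d = {}"
    using assms(2) dist_edges_eq_empty_iff by blast
  then show ?thesis
    unfolding G_prime_G_graph using dist_edges_split[OF assms(1)] by simp
qed

lemma G_prime_G_graph_eq_far:
  assumes "r \<noteq> diam" "r \<notin> Sp near d"
  shows "G_prime (G_graph r X d) = G_prime (G_graph r far d)"
proof -
  have "dist_edges r near d = {}"
    using assms(2) dist_edges_eq_empty_iff by blast
  then show ?thesis
    unfolding G_prime_G_graph using dist_edges_split[OF assms(1)] by simp
qed

lemma bipartite_distance_graphs_iff:
  "bipartite_distance_graphs X d \<longleftrightarrow>
     diam \<notin> Sp far d \<and> Sp near d \<inter> Sp far d = {} \<and>
     bipartite_distance_graphs near d \<and> bipartite_distance_graphs far d"
  (is "?all \<longleftrightarrow> ?diam \<and> ?disj \<and> ?near \<and> ?far")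
proof
  assume ?all
  then have cb: "complete_bipartite (G_prime (G_graph r X d))" if "r \<in> Sp X d" for r
    using that unfolding bipartite_distance_graphs_def by blast
  show "?diam \<and> ?disj \<and> ?near \<and> ?far"
  proof (intro conjI)
    show ?diam
      using cb[OF diam_in_Sp] by (rule diam_notin_Sp_far_if_complete_bipartite)
    show ?disj
      using cb not_complete_bipartite_if_shared_distance unfolding Sp_split by blast
    show ?near
      unfolding bipartite_distance_graphs_def
    proof
      fix r assume r: "r \<in> Sp near d"
      have "r \<noteq> diam" using r diam_notin_Sp_near by blast
      moreover have "r \<notin> Sp far d" using r \<open>?disj\<close> by blast
      ultimately show "complete_bipartite (G_prime (G_graph r near d))"
        using cb[of r] r G_prime_G_graph_eq_near unfolding Sp_split by simp
    qed
    show ?far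
      unfolding bipartite_distance_graphs_def
    proof
      fix r assume r: "r \<in> Sp far d"
      have "r \<noteq> diam" using r \<open>?diam\<close> by blast
      moreover have "r \<notin> Sp near d" using r \<open>?disj\<close> by blast
      ultimately show "complete_bipartite (G_prime (G_graph r far d))"
        using cb[of r] r G_prime_G_graph_eq_far unfolding Sp_split by simp
    qed
  qed
next
  assume parts: "?diam \<and> ?disj \<and> ?near \<and> ?far"
  show ?all
    unfolding bipartite_distance_graphs_def Sp_split
  proof
    fix r assume "r \<in> insert diam (Sp near d \<union> Sp far d)"
    then consider "r = diam" | "r \<in> Sp near d" | "r \<in> Sp far d" by blast
    then show "complete_bipartite (G_prime (G_graph r X d))"
    proof cases
      case 1
      then show ?thesis using parts diam_graph_complete_bipartite by blast
    next
      case 2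
      then have "r \<noteq> diam" "r \<notin> Sp far d"
        using parts diam_notin_Sp_near by blast+
      then show ?thesis
        using 2 parts G_prime_G_graph_eq_near unfolding bipartite_distance_graphs_def by simp
    next
      case 3
      then have "r \<noteq> diam" "r \<notin> Sp near d"
        using parts by blast+
      then show ?thesis
        using 3 parts G_prime_G_graph_eq_far unfolding bipartite_distance_graphs_def by simp
    qed
  qed
qed

end

lemma card_Sp_eq_iff_bipartite_distance_graphs:
  "finite X \<Longrightarrow> ultrametric_on X d \<Longrightarrow> X \<noteq> {} \<Longrightarrow>
   card (Sp X d) = card X - 1 \<longleftrightarrow> bipartite_distance_graphs X d"
proof (induction "card X" arbitrary: X rule: less_induct)
  case less
  show ?case
  proof (cases "card X \<ge> 2")
    case False
    with less.prems show ?thesis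
      by (auto elim: singleton_if_card_less_2 simp: bipartite_distance_graphs_singleton)
  next
    case True
    obtain x0 where "x0 \<in> X" using less.prems by blast
    then interpret finite_ultrametric_split X d x0
      using less.prems True by unfold_locales
    have "near \<noteq> {}" using base_near by blast
    then have "card (Sp near d) = card near - 1 \<longleftrightarrow> bipartite_distance_graphs near d"
      "card (Sp far d) = card far - 1 \<longleftrightarrow> bipartite_distance_graphs far d"
      using less.hyps card_near_less card_far_less finite_near finite_far
        ultrametric_near ultrametric_far far_nonempty by blast+
    then show ?thesis
      using card_Sp_eq_iff bipartite_distance_graphs_iff by simp
  qed
qed

theorem theorem8:
  fixes X :: "'a set" and d :: "'a \<Rightarrow> 'a \<Rightarrow> real"
  assumes "finite X" and "ultrametric_on X d" and "card X \<ge> 2"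
  shows "in_U X d \<longleftrightarrow> (\<forall>r\<in>Sp X d. complete_bipartite (G_prime (G_graph r X d)))"
proof -
  have "X \<noteq> {}" using assms(3) by auto
  then show ?thesis
    using card_Sp_eq_iff_bipartite_distance_graphs[OF assms(1,2)] assms(1,2)
    unfolding in_U_def bipartite_distance_graphs_def by simp
qed

end
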